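(* Let $p\ge 3$ be a prime, let $r=\lfloor\sqrt{p}\rfloor$ and $s=\lfloor\frac{p-2}{r}\rfloor$, and let $t$ be any integer with $0\le t\le p-r$. Then the set $$\{(x,x):x\in\mathbb{F}_p\}\ \cup\ \big([t,t+r-1]\times\{0,r,2r,\ldots,sr,p-1\}\big)\subseteq\mathbb{F}_p^2$$ is a $1$-blocking set in $\mathbb{F}_p^2$, i.e., it meets every affine line of $\mathbb{F}_p^2$ in at least one point.
   Context: $\mathbb{F}_p$ is identified with $\{0,1,\ldots,p-1\}$ with the ordering inherited from $\mathbb{Z}$; for integers $m\le n$, $[m,n]$ denotes $\{m,m+1,\ldots,n\}$ (viewed as elements of $\mathbb{F}_p$). An affine line in $\mathbb{F}_p^2$ is a set $\{\mathbf{a}+\lambda\mathbf{v}:\lambda\in\mathbb{F}_p\}$ with $\mathbf{v}\neq\mathbf{0}$. *)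

theory Defs
  imports "HOL-Analysis.Analysis" "HOL-Computational_Algebra.Primes"
begin

text \<open>F_p is modelled as the integers {0..<p}, with arithmetic taken mod p.
  Points of F_p^2 are pairs of such integers.\<close>

definition Fp :: "int \<Rightarrow> int set" where
  "Fp p = {0..<p}"

definition affine_line :: "int \<Rightarrow> int \<times> int \<Rightarrow> int \<times> int \<Rightarrow> (int \<times> int) set" where
  "affine_line p a v =
     {((fst a + l * fst v) mod p, (snd a + l * snd v) mod p) | l. l \<in> Fp p}"

definition is_affine_line :: "int \<Rightarrow> (int \<times> int) set \<Rightarrow> bool" where
  "is_affine_line p L \<longleftrightarrow>
     (\<exists>a v. a \<in> Fp p \<times> Fp p \<and> v \<in> Fp p \<times> Fp p \<and> v \<noteq> (0, 0) \<and> L = affine_line p a v)"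

definition blocking_set_1 :: "int \<Rightarrow> (int \<times> int) set \<Rightarrow> bool" where
  "blocking_set_1 p B \<longleftrightarrow> B \<subseteq> Fp p \<times> Fp p \<and>
     (\<forall>L. is_affine_line p L \<longrightarrow> L \<inter> B \<noteq> {})"

end

theory Submission
  imports Defs "HOL-Number_Theory.Cong"
begin

text \<open>A line whose direction (v1, v2) has v1 \<noteq> v2 meets the diagonal, since
  a1 + l v1 = a2 + l v2 is a linear equation in l with nonzero coefficient.
  The remaining lines are the translates of the diagonal, y - x = c. The rows
  0, r, ..., s r, p - 1 leave no gap of r consecutive residues, so for every c
  some x in the window [t, t + r - 1] has x + c in a row.\<close>

definition grid_rows :: "int \<Rightarrow> int \<Rightarrow> int \<Rightarrow> int set" where
  "grid_rows p r s = {k * r | k. 0 \<le> k \<and> k \<le> s} \<union> {p - 1}"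

lemma Fp_mod_eq: "x \<in> Fp p \<Longrightarrow> x mod p = x"
  by (simp add: Fp_def)

lemma affine_line_point:
  "l \<in> Fp p \<Longrightarrow> ((fst a + l * fst v) mod p, (snd a + l * snd v) mod p) \<in> affine_line p a v"
  unfolding affine_line_def by blast

lemma exists_Fp_mult_cong:
  fixes p w d :: int
  assumes "coprime w p" and "p > 0"
  shows "\<exists>l \<in> Fp p. [l * w = d] (mod p)"
proof -
  obtain u where u: "[w * u = 1] (mod p)"
    using cong_solve_coprime_int assms(1) by blast
  define l where "l = (u * d) mod p"
  have "[l * w = u * d * w] (mod p)"
    unfolding l_def cong_def by (simp add: mod_mult_left_eq)
  also have "u * d * w = (w * u) * d"
    by simp
  also have "[(w * u) * d = 1 * d] (mod p)"
    using u by (rule cong_mult) simp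
  finally have "[l * w = d] (mod p)"
    by simp
  moreover have "l \<in> Fp p"
    using assms(2) by (simp add: l_def Fp_def)
  ultimately show ?thesis
    by blast
qed

lemma Fp_diff_coprime:
  fixes p x y :: int
  assumes "prime p" and "x \<in> Fp p" "y \<in> Fp p" "x \<noteq> y"
  shows "coprime (x - y) p"
proof -
  have "\<not> p dvd (x - y)"
  proof
    assume "p dvd (x - y)"
    then have "x mod p = y mod p"
      by (simp add: mod_eq_dvd_iff)
    then show False
      using assms(2-4) by (simp add: Fp_mod_eq)
  qed
  then show ?thesis
    by (metis prime_imp_coprime[OF assms(1)] coprime_commute)
qed

lemma affine_line_meets_diagonal:
  fixes p :: int and a v :: "int \<times> int"
  assumes "prime p" and "v \<in> Fp p \<times> Fp p" and "fst v \<noteq> snd v"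
  shows "\<exists>x \<in> Fp p. (x, x) \<in> affine_line p a v"
proof -
  have "coprime (snd v - fst v) p"
    using Fp_diff_coprime[OF assms(1), of "snd v" "fst v"] assms(2,3) by (simp add: mem_Times_iff)
  then obtain l where l: "l \<in> Fp p" "[l * (snd v - fst v) = fst a - snd a] (mod p)"
    using exists_Fp_mult_cong prime_gt_0_int[OF assms(1)] by blast
  have "snd a + l * snd v = snd a + l * (snd v - fst v) + l * fst v"
    by (simp add: algebra_simps)
  also have "[\<dots> = snd a + (fst a - snd a) + l * fst v] (mod p)"
    using l(2) by (intro cong_add) auto
  also have "snd a + (fst a - snd a) + l * fst v = fst a + l * fst v"
    by simp
  finally have "(snd a + l * snd v) mod p = (fst a + l * fst v) mod p"
    unfolding cong_def .
  then have "((fst a + l * fst v) mod p, (fst a + l * fst v) mod p) \<in> affine_line p a v"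
    using affine_line_point[OF l(1), of a v] by simp
  moreover have "(fst a + l * fst v) mod p \<in> Fp p"
    using prime_gt_0_int[OF assms(1)] by (simp add: Fp_def)
  ultimately show ?thesis
    by blast
qed

lemma affine_line_diagonal_direction_mem:
  fixes p w x y :: int and a :: "int \<times> int"
  assumes "prime p" and "0 < w" "w < p"
    and "x \<in> Fp p" "y \<in> Fp p" and "[y - x = snd a - fst a] (mod p)"
  shows "(x, y) \<in> affine_line p a (w, w)"
proof -
  have "coprime w p"
    using Fp_diff_coprime[OF assms(1), of w 0] assms(2,3) by (simp add: Fp_def)
  then obtain l where l: "l \<in> Fp p" "[l * w = x - fst a] (mod p)"
    using exists_Fp_mult_cong prime_gt_0_int[OF assms(1)] by blast
  have "[fst a + l * w = fst a + (x - fst a)] (mod p)"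
    using l(2) by (intro cong_add) auto
  then have fst_eq: "(fst a + l * w) mod p = x"
    using Fp_mod_eq[OF assms(4)] by (simp add: cong_def)
  have "[snd a + l * w = snd a + (x - fst a)] (mod p)"
    using l(2) by (intro cong_add) auto
  also have "snd a + (x - fst a) = x + (snd a - fst a)"
    by simp
  also have "[x + (snd a - fst a) = x + (y - x)] (mod p)"
    using cong_sym[OF assms(6)] by (intro cong_add) auto
  also have "x + (y - x) = y"
    by simp
  finally have "(snd a + l * w) mod p = y"
    using Fp_mod_eq[OF assms(5)] by (simp add: cong_def)
  then show ?thesis
    using affine_line_point[OF l(1), of a "(w, w)"] fst_eq by simp
qed

lemma div_mult_bounds:
  fixes n r :: int
  assumes "r > 0"
  shows "n div r * r \<le> n" and "n < n div r * r + r"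
  using div_mult_mod_eq[of n r] pos_mod_bound[OF assms, of n] pos_mod_sign[OF assms, of n]
  by linarith+

lemma grid_rows_subset_Fp:
  fixes p r s :: int
  assumes "r \<ge> 1" and "s = (p - 2) div r" and "p \<ge> 1"
  shows "grid_rows p r s \<subseteq> Fp p"
proof
  fix y
  assume "y \<in> grid_rows p r s"
  then consider "y = p - 1" | k where "y = k * r" "0 \<le> k" "k \<le> s"
    unfolding grid_rows_def by blast
  then show "y \<in> Fp p"
  proof cases
    case 1
    then show ?thesis
      using assms(3) by (simp add: Fp_def)
  next
    case 2
    have "k * r \<le> s * r"
      using 2 assms(1) by (intro mult_right_mono) auto
    moreover have "s * r \<le> p - 2"
      using div_mult_bounds(1)[of r "p - 2"] assms(1,2) by simp
    moreover have "0 \<le> k * r"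
      using 2 assms(1) by simp
    ultimately show ?thesis
      unfolding Fp_def atLeastLessThan_iff 2(1) by linarith
  qed
qed

text \<open>The row just above m is r * ceil(m / r), unless m exceeds s r;
  then p - 1 serves, because p - 1 - s r \<le> r.\<close>

lemma grid_rows_meet_window:
  fixes p r s m :: int
  assumes "r \<ge> 1" and "s = (p - 2) div r" and "0 \<le> m" "m \<le> p - 1"
  shows "\<exists>y \<in> grid_rows p r s. m \<le> y \<and> y \<le> m + r - 1"
proof -
  have sr: "s * r \<le> p - 2" "p - 2 < s * r + r"
    using div_mult_bounds[of r "p - 2"] assms(1,2) by simp_all
  show ?thesis
  proof (cases "m \<le> s * r")
    case True
    define k where "k = (m + r - 1) div r"
    have kr: "k * r \<le> m + r - 1" "m + r - 1 < k * r + r"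
      using div_mult_bounds[of r "m + r - 1"] assms(1) unfolding k_def by simp_all
    have "0 \<le> k"
      unfolding k_def using assms(1,3) by (simp add: pos_imp_zdiv_nonneg_iff)
    moreover have "k \<le> s"
    proof (rule ccontr)
      assume "\<not> k \<le> s"
      then have "(s + 1) * r \<le> k * r"
        using assms(1) by (intro mult_right_mono) auto
      then show False
        using kr True by (simp add: algebra_simps)
    qed
    ultimately have "k * r \<in> grid_rows p r s"
      unfolding grid_rows_def by blast
    then show ?thesis
      using kr by (intro bexI[of _ "k * r"]) auto
  next
    case False
    have "p - 1 \<in> grid_rows p r s"
      unfolding grid_rows_def by blast
    moreover have "m \<le> p - 1 \<and> p - 1 \<le> m + r - 1"
      using False sr assms(4) by linarith
    ultimately show ?thesis
      by blast
  qed
qed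

lemma affine_line_meets_grid:
  fixes p r s t w :: int and a :: "int \<times> int"
  assumes "prime p" and "r \<ge> 1" and "s = (p - 2) div r"
    and "0 \<le> t" "t \<le> p - r" and "0 < w" "w < p"
  shows "affine_line p a (w, w) \<inter> ({t..t + r - 1} \<times> grid_rows p r s) \<noteq> {}"
proof -
  have p0: "p > 0"
    using prime_gt_0_int[OF assms(1)] .
  define m where "m = (t + (snd a - fst a)) mod p"
  have "0 \<le> m" "m \<le> p - 1"
    unfolding m_def using p0 by simp_all
  then obtain y where y: "y \<in> grid_rows p r s" "m \<le> y" "y \<le> m + r - 1"
    using grid_rows_meet_window[OF assms(2,3)] by blast
  define x where "x = t + (y - m)"
  have x: "x \<in> {t..t + r - 1}"
    using y(2,3) unfolding x_def by simp
  moreover have "x \<in> Fp p"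
    using x assms(4,5) by (simp add: Fp_def)
  moreover have "y \<in> Fp p"
    using grid_rows_subset_Fp[OF assms(2,3)] p0 y(1) by auto
  moreover have "[y - x = snd a - fst a] (mod p)"
    unfolding x_def m_def cong_def by (simp add: mod_diff_left_eq)
  ultimately have "(x, y) \<in> affine_line p a (w, w)"
    using affine_line_diagonal_direction_mem[OF assms(1,6,7)] by blast
  then show ?thesis
    using x y(1) by blast
qed

theorem lemma1:
  fixes p r s t :: int
  assumes "prime p" and "p \<ge> 3"
    and "r = \<lfloor>sqrt (real_of_int p)\<rfloor>"
    and "s = (p - 2) div r"
    and "0 \<le> t" and "t \<le> p - r"
  shows "blocking_set_1 p
     ({(x, x) | x. x \<in> Fp p} \<union>
      ({t..t + r - 1} \<times> ({k * r | k. 0 \<le> k \<and> k \<le> s} \<union> {p - 1})))"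
proof -
  have r1: "r \<ge> 1"
    using assms(2,3) by (simp add: le_floor_iff)
  let ?B = "{(x, x) | x. x \<in> Fp p} \<union> ({t..t + r - 1} \<times> grid_rows p r s)"
  have "{t..t + r - 1} \<subseteq> Fp p"
    using assms(5,6) by (auto simp: Fp_def)
  then have "?B \<subseteq> Fp p \<times> Fp p"
    using grid_rows_subset_Fp[OF r1 assms(4)] assms(2) by auto
  moreover have "L \<inter> ?B \<noteq> {}" if line: "is_affine_line p L" for L
  proof -
    obtain a v where v: "v \<in> Fp p \<times> Fp p" "v \<noteq> (0, 0)" and L: "L = affine_line p a v"
      using line unfolding is_affine_line_def by blast
    show ?thesis
    proof (cases "fst v = snd v")
      case True
      then have "L = affine_line p a (snd v, snd v)" "0 < snd v" "snd v < p"
        using v L by (auto simp: Fp_def prod_eq_iff)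
      then have "L \<inter> ({t..t + r - 1} \<times> grid_rows p r s) \<noteq> {}"
        using affine_line_meets_grid[OF assms(1) r1 assms(4-6)] by simp
      then show ?thesis
        by blast
    next
      case False
      then show ?thesis
        using affine_line_meets_diagonal[OF assms(1) v(1)] L by blast
    qed
  qed
  ultimately have "blocking_set_1 p ?B"
    unfolding blocking_set_1_def by blast
  then show ?thesis
    unfolding grid_rows_def .
qed

end
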